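(* Fix $\epsilon>0$ and let $\theta=\theta(n)\in[0,\epsilon]$ be any function. Then $$\frac{\mu_k}{k_1!\,k_2!}\ge b^{\theta n/2}\exp(o(n)),$$ i.e. there is a function $h(n)=o(n)$ with $\mu_k/(k_1!k_2!)\ge b^{\theta(n)n/2}e^{h(n)}$ for all $n$.
   Context: Let $p\in(0,1)$ be constant, $q=1-p$, $b=1/q$, $\gamma=2\log_b n-2\log_b\log_b n-2\log_b 2$, $\Delta=\gamma-\lfloor\gamma\rfloor$, and $x_0=x_0(n)$ the smallest nonnegative $x$ with $(1-\Delta+x)\log_b(1-\Delta+x)+(1-\Delta)(\Delta-x)/2\le0$. Let $k=\lceil n/(\gamma-x_0-\theta)\rceil$, $\delta=n/k-\lfloor n/k\rfloor$, $k_1=\delta k$, $k_2=(1-\delta)k$. An ordered $k$-equipartition of the vertex set $[n]$ is a sequence of $k$ disjoint sets covering $[n]$, the first $k_1$ of size $\lceil n/k\rceil$ and the remaining $k_2$ of size $\lfloor n/k\rfloor$. Let $P=n!/(\lceil n/k\rceil!^{k_1}\lfloor n/k\rfloor!^{k_2})$ be their number, $f=k_1\binom{\lceil n/k\rceil}{2}+k_2\binom{\lfloor n/k\rfloor}{2}$, and $\mu_k=Pq^f$, which is the expected number of ordered $k$-equipartitions all of whose parts are independent sets in $G\sim\mathcal{G}(n,p)$. *)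

theory Defs
  imports Complex_Main "HOL-Library.Landau_Symbols"
begin

definition qq :: "real \<Rightarrow> real" where "qq p = 1 - p"
definition bb :: "real \<Rightarrow> real" where "bb p = 1 / qq p"

definition gam :: "real \<Rightarrow> nat \<Rightarrow> real" where
  "gam p n = 2 * log (bb p) (real n) - 2 * log (bb p) (log (bb p) (real n)) - 2 * log (bb p) 2"

definition Delta :: "real \<Rightarrow> nat \<Rightarrow> real" where
  "Delta p n = gam p n - of_int \<lfloor>gam p n\<rfloor>"

definition x0 :: "real \<Rightarrow> nat \<Rightarrow> real" where
  "x0 p n = (let D = Delta p n in
     Inf {x::real. 0 \<le> x \<and>
        (1 - D + x) * log (bb p) (1 - D + x) + (1 - D) * (D - x) / 2 \<le> 0})"

definition kk :: "real \<Rightarrow> real \<Rightarrow> nat \<Rightarrow> nat" where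
  "kk p t n = nat \<lceil>real n / (gam p n - x0 p n - t)\<rceil>"

text \<open>Part sizes ceil(n/k), floor(n/k); k1 = delta*k = n mod k, k2 = (1-delta) k = k - k1.\<close>
definition szc :: "real \<Rightarrow> real \<Rightarrow> nat \<Rightarrow> nat" where
  "szc p t n = nat \<lceil>real n / real (kk p t n)\<rceil>"
definition szf :: "real \<Rightarrow> real \<Rightarrow> nat \<Rightarrow> nat" where
  "szf p t n = nat \<lfloor>real n / real (kk p t n)\<rfloor>"
definition k1 :: "real \<Rightarrow> real \<Rightarrow> nat \<Rightarrow> nat" where
  "k1 p t n = n mod kk p t n"
definition k2 :: "real \<Rightarrow> real \<Rightarrow> nat \<Rightarrow> nat" where
  "k2 p t n = kk p t n - k1 p t n"

text \<open>Number of ordered k-equipartitions, f, and mu_k = P q^f.\<close>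
definition Pn :: "real \<Rightarrow> real \<Rightarrow> nat \<Rightarrow> real" where
  "Pn p t n = fact n / (fact (szc p t n) ^ k1 p t n * fact (szf p t n) ^ k2 p t n)"
definition ff :: "real \<Rightarrow> real \<Rightarrow> nat \<Rightarrow> nat" where
  "ff p t n = k1 p t n * (szc p t n choose 2) + k2 p t n * (szf p t n choose 2)"
definition mu :: "real \<Rightarrow> real \<Rightarrow> nat \<Rightarrow> real" where
  "mu p t n = Pn p t n * qq p ^ ff p t n"

end

theory Submission
  imports Defs "HOL-Real_Asymp.Real_Asymp"
begin

text \<open>Write \<open>L = ln b\<close> and \<open>M = ln (2 log\<^sub>b n)\<close>, so that \<open>L\<gamma>/2 = ln n - M\<close>.
  Taking logarithms, \<open>ln n! \<ge> n ln n - n\<close>, the part factorials contribute at most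
  \<open>(n + k) M - n\<close> since every part has fewer than \<open>\<gamma> + 2 \<le> e\<^sup>M\<close> vertices, the exponent
  satisfies \<open>2f \<le> n (n/k - 1) + k\<close>, and \<open>k\<^sub>1! k\<^sub>2! \<le> n\<^sup>k\<close>. Because \<open>n/k \<le> \<gamma> - \<theta>\<close>,
  the terms of order \<open>n log n\<close> cancel and
  \<open>ln (\<mu>\<^sub>k/(k\<^sub>1! k\<^sub>2!)) \<ge> L\<theta>n/2 + Ln/2 - k (M + L + ln n)\<close>.
  With \<open>k \<le> n/(\<gamma> - 1 - \<epsilon>) + 1\<close> the last term is \<open>Ln/2 + o(n)\<close>.\<close>

lemma ln_fact_ge: "real m * ln (real m) - real m \<le> ln (fact m)"
proof (induction m)
  case 0
  then show ?case by simp
next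
  case (Suc m)
  have step: "real m * ln (real m + 1) \<le> real m * ln (real m) + 1"
  proof (cases "m = 0")
    case False
    then have m: "real m > 0" by simp
    have "ln ((real m + 1) / real m) \<le> (real m + 1) / real m - 1"
      using m by (intro ln_le_minus_one) simp
    then have "ln (real m + 1) - ln (real m) \<le> 1 / real m"
      using m by (simp add: ln_div field_simps)
    then have "real m * (ln (real m + 1) - ln (real m)) \<le> 1"
      using m by (simp add: field_simps)
    then show ?thesis by (simp add: algebra_simps)
  qed simp
  have "ln (fact (Suc m)) = ln (real m + 1) + ln (fact m)"
    by (simp add: ln_mult add.commute)
  with Suc step show ?case by (simp add: algebra_simps)
qed

lemma ln_fact_le: "ln (fact m) \<le> (real m + 1) * ln (real m + 1) - real m"
proof (induction m)
  case 0
  then show ?case by simp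
next
  case (Suc m)
  have "ln ((real m + 1) / (real m + 2)) \<le> (real m + 1) / (real m + 2) - 1"
    by (intro ln_le_minus_one) simp
  then have "1 / (real m + 2) \<le> ln (real m + 2) - ln (real m + 1)"
    by (simp add: ln_div field_simps)
  then have step: "1 \<le> (real m + 2) * (ln (real m + 2) - ln (real m + 1))"
    by (simp add: field_simps)
  have "ln (fact (Suc m)) = ln (real m + 1) + ln (fact m)"
    by (simp add: ln_mult add.commute)
  with Suc step show ?case by (simp add: algebra_simps)
qed

lemma ln_fact_le_of_ln_le:
  assumes "ln (real m + 1) \<le> M"
  shows "ln (fact m) \<le> (real m + 1) * M - real m"
  using ln_fact_le[of m] mult_left_mono[OF assms, of "real m + 1"] by (simp add: algebra_simps)

lemma ln_fact_mult_fact_le: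
  assumes "r + s \<le> n"
  shows "ln (fact r * fact s) \<le> real (r + s) * ln (real n)"
proof -
  have "fact r * fact s \<le> (fact (r + s) :: nat)"
    by (intro dvd_imp_le fact_fact_dvd_fact) simp
  then have "fact r * fact s \<le> (fact (r + s) :: real)"
    by (metis of_nat_fact of_nat_le_iff of_nat_mult)
  also have "\<dots> \<le> real ((r + s) ^ (r + s))"
    by (rule fact_le_power)
  also have "\<dots> \<le> real n ^ (r + s)"
    using assms by (simp add: power_mono)
  finally have "ln (fact r * fact s) \<le> ln (real n ^ (r + s))"
    by (intro ln_mono) (auto simp: add_pos_pos)
  then show ?thesis
    by (simp add: ln_realpow)
qed

lemma real_choose_two: "real (m choose 2) = real m * (real m - 1) / 2"
  by (induction m) (simp_all add: numeral_2_eq_2 field_simps)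

lemma nat_ceiling_divide_of_nat:
  assumes "0 < k" "n mod k \<noteq> 0"
  shows "nat \<lceil>real n / real k\<rceil> = n div k + 1"
proof -
  have "real n / real k = real (n div k) + real (n mod k) / real k"
    using assms(1) by (simp add: field_simps flip: of_nat_mult of_nat_add)
  moreover have "0 < real (n mod k) / real k" "real (n mod k) / real k < 1"
    using assms by simp_all
  ultimately have "\<lceil>real n / real k\<rceil> = int (n div k) + 1"
    by (intro ceiling_unique) auto
  then show ?thesis by simp
qed

lemma equipartition_size_sum:
  assumes "0 < k"
  shows "n mod k * nat \<lceil>real n / real k\<rceil> + (k - n mod k) * nat \<lfloor>real n / real k\<rfloor> = n"
proof (cases "n mod k = 0")
  case True
  then show ?thesis
    using div_mult_mod_eq[of n k] by (simp add: floor_divide_of_nat_eq mult.commute)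
next
  case False
  have "n mod k < k" using assms by simp
  then have "n mod k * (n div k + 1) + (k - n mod k) * (n div k) = k * (n div k) + n mod k"
    by (simp add: algebra_simps diff_mult_distrib)
  then show ?thesis
    using False assms by (simp add: nat_ceiling_divide_of_nat floor_divide_of_nat_eq)
qed

lemma equipartition_pairs_le:
  assumes "0 < k"
  shows "2 * real (n mod k * (nat \<lceil>real n / real k\<rceil> choose 2)
      + (k - n mod k) * (nat \<lfloor>real n / real k\<rfloor> choose 2))
    \<le> real n * (real n / real k - 1) + real k"
proof -
  define q r where "q = real (n div k)" and "r = real (n mod k)"
  have n: "real n = real k * q + r"
    unfolding q_def r_def by (simp flip: of_nat_mult of_nat_add)
  have rk: "r < real k" unfolding q_def r_def using assms by simp
  have ceil: "real (n mod k * (nat \<lceil>real n / real k\<rceil> choose 2)) = r * (q + 1) * q / 2"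
    using assms unfolding q_def r_def
    by (cases "n mod k = 0") (simp_all add: nat_ceiling_divide_of_nat real_choose_two)
  have floor: "real ((k - n mod k) * (nat \<lfloor>real n / real k\<rfloor> choose 2)) = (real k - r) * q * (q - 1) / 2"
    using assms unfolding q_def r_def by (simp add: floor_divide_of_nat_eq real_choose_two of_nat_diff)
  have "real n * (real n / real k - 1) + real k - (r * (q + 1) * q + (real k - r) * q * (q - 1))
      = (real k - r) + r * r / real k"
    unfolding n using assms by (simp add: field_simps)
  moreover have "0 \<le> r * r / real k" by simp
  moreover have "2 * (r * (q + 1) * q / 2 + (real k - r) * q * (q - 1) / 2)
      = r * (q + 1) * q + (real k - r) * q * (q - 1)"
    by simp
  ultimately show ?thesis
    using rk unfolding of_nat_add ceil floor by linarith
qed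

lemma ln_fact_equipartition_le:
  assumes "0 < k" "ln (real n / real k + 2) \<le> M"
  shows "ln (fact (nat \<lceil>real n / real k\<rceil>) ^ (n mod k) * fact (nat \<lfloor>real n / real k\<rfloor>) ^ (k - n mod k))
    \<le> (real n + real k) * M - real n"
proof -
  define c fl r where "c = nat \<lceil>real n / real k\<rceil>" and "fl = nat \<lfloor>real n / real k\<rfloor>"
    and "r = n mod k"
  have q: "real (n div k) \<le> real n / real k"
    by (rule of_nat_div_le_of_nat)
  have "ln (real fl + 1) \<le> M"
    using assms q unfolding c_def fl_def r_def by (simp add: floor_divide_of_nat_eq) (smt (verit) ln_le_cancel_iff of_nat_0_le_iff)
  then have fl: "real (k - r) * ln (fact fl) \<le> real (k - r) * ((real fl + 1) * M - real fl)"
    by (intro mult_left_mono ln_fact_le_of_ln_le) auto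
  have c: "real r * ln (fact c) \<le> real r * ((real c + 1) * M - real c)"
  proof (cases "r = 0")
    case False
    then have "ln (real c + 1) \<le> M"
      using assms q unfolding c_def fl_def r_def
      by (simp add: nat_ceiling_divide_of_nat) (smt (verit) ln_le_cancel_iff of_nat_0_le_iff)
    then show ?thesis by (intro mult_left_mono ln_fact_le_of_ln_le) auto
  qed simp
  have sizes: "real r * real c + real (k - r) * real fl = real n"
    using equipartition_size_sum[OF assms(1), of n] unfolding c_def fl_def r_def
    by (metis of_nat_add of_nat_mult)
  have parts: "real r + real (k - r) = real k"
    unfolding c_def fl_def r_def using assms(1) by simp
  have "ln (fact c ^ r * fact fl ^ (k - r)) = real r * ln (fact c) + real (k - r) * ln (fact fl)"
    by (simp add: ln_mult ln_realpow)
  also have "\<dots> \<le> real r * ((real c + 1) * M - real c) + real (k - r) * ((real fl + 1) * M - real fl)"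
    using c fl by linarith
  also have "\<dots> = (real r * real c + real (k - r) * real fl + (real r + real (k - r))) * M
      - (real r * real c + real (k - r) * real fl)"
    by (simp add: algebra_simps)
  finally have "ln (fact c ^ r * fact fl ^ (k - r)) \<le> (real n + real k) * M - real n"
    unfolding sizes parts .
  then show ?thesis
    unfolding c_def fl_def r_def .
qed

lemma nat_ceiling_quotient_bounds:
  fixes a :: real
  assumes "1 \<le> a" "1 \<le> n"
  defines "k \<equiv> nat \<lceil>real n / a\<rceil>"
  shows "1 \<le> k" "k \<le> n" "real n / real k \<le> a" "real k \<le> real n / a + 1"
proof -
  have pos: "0 < real n / a" and "real n / a \<le> real n"
    using assms by (simp_all add: field_simps)
  then show "k \<le> n"
    unfolding k_def by (simp add: nat_le_iff ceiling_le_iff)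
  have k: "real n / a \<le> real k" "real k \<le> real n / a + 1"
    unfolding k_def using pos by linarith+
  then show "1 \<le> k" "real k \<le> real n / a + 1"
    using pos by simp_all
  have "0 < real k"
    using k pos by linarith
  then show "real n / real k \<le> a"
    using k(1) assms(1) by (simp add: pos_divide_le_eq field_simps)
qed

lemma x0_bounds: "0 \<le> x0 p n" "x0 p n < 1"
proof -
  define D where "D = Delta p n"
  define S where "S = {x::real. 0 \<le> x \<and>
      (1 - D + x) * log (bb p) (1 - D + x) + (1 - D) * (D - x) / 2 \<le> 0}"
  have D: "0 \<le> D" "D < 1"
    unfolding D_def Delta_def by linarith+
  have "D \<in> S"
    unfolding S_def using D by simp
  moreover have "bdd_below S"
    unfolding S_def by (auto intro: bdd_belowI)
  moreover have "x0 p n = Inf S"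
    unfolding x0_def S_def D_def Let_def ..
  ultimately show "0 \<le> x0 p n" "x0 p n < 1"
    using D cInf_lower[of D S] by (auto intro!: cInf_greatest simp: S_def)
qed

lemma bb_gt_one: "0 < p \<Longrightarrow> p < 1 \<Longrightarrow> 1 < bb p"
  unfolding bb_def qq_def by (simp add: field_simps)

lemma ln_qq: "p < 1 \<Longrightarrow> ln (qq p) = - ln (bb p)"
  unfolding bb_def qq_def by (simp add: ln_div)

lemma gam_conv_ln:
  "gam p n = 2 * ln n / ln (bb p) - 2 * ln (ln n / ln (bb p)) / ln (bb p) - 2 * ln 2 / ln (bb p)"
  unfolding gam_def log_def by simp

lemma eventually_gam_large:
  assumes "0 < p" "p < 1"
  shows "eventually (\<lambda>n. 1 \<le> gam p n - 1 - e \<and> gam p n + 2 \<le> 2 * log (bb p) n) at_top"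
proof -
  define L where "L = ln (bb p)"
  have "0 < L"
    unfolding L_def using bb_gt_one[OF assms] by simp
  then have "eventually (\<lambda>n::nat. 1 \<le> 2 * ln n / L - 2 * ln (ln n / L) / L - 2 * ln 2 / L - 1 - e) at_top"
    and "eventually (\<lambda>n::nat. 2 * ln n / L - 2 * ln (ln n / L) / L - 2 * ln 2 / L + 2 \<le> 2 * (ln n / L)) at_top"
    by real_asymp+
  then show ?thesis
    unfolding gam_conv_ln log_def L_def by (rule eventually_conj)
qed

definition partition_error :: "real \<Rightarrow> real \<Rightarrow> nat \<Rightarrow> real" where
  "partition_error p e n =
    (real n / (gam p n - 1 - e) + 1) * (ln (2 * log (bb p) n) + ln (bb p) + ln n) - ln (bb p) * n / 2"

text \<open>The two summands are of order \<open>n ln n / \<gamma> \<sim> n ln b / 2\<close> and cancel up to \<open>o(n)\<close>.\<close>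

lemma partition_error_small:
  assumes "0 < p" "p < 1"
  shows "partition_error p e \<in> o(\<lambda>n. real n)"
proof -
  define L where "L = ln (bb p)"
  have "0 < L"
    unfolding L_def using bb_gt_one[OF assms] by simp
  then have "(\<lambda>n::nat. (real n / (2 * ln n / L - 2 * ln (ln n / L) / L - 2 * ln 2 / L - 1 - e) + 1)
      * (ln (2 * (ln n / L)) + L + ln n) - L * n / 2) \<in> o(\<lambda>n. real n)"
    by real_asymp
  then show ?thesis
    unfolding partition_error_def gam_conv_ln log_def L_def .
qed

lemma ln_mu_ratio_ge_counting:
  assumes p: "0 < p" "p < 1" and k: "0 < kk p t n" "kk p t n \<le> n"
    and part_size: "ln (real n / real (kk p t n) + 2) \<le> M"
  defines "k \<equiv> real (kk p t n)"
  shows "(n * ln n - n) - ((n + k) * M - n) - ln (bb p) * (n * (n / k - 1) + k) / 2 - k * ln n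
    \<le> ln (mu p t n / (fact (k1 p t n) * fact (k2 p t n)))"
proof -
  have decomp: "ln (mu p t n / (fact (k1 p t n) * fact (k2 p t n)))
      = ln (fact n) - ln (fact (szc p t n) ^ k1 p t n * fact (szf p t n) ^ k2 p t n)
        - ln (bb p) * real (ff p t n) - ln (fact (k1 p t n) * fact (k2 p t n))"
    unfolding mu_def Pn_def using p ln_qq[of p] by (simp add: qq_def ln_div ln_mult ln_realpow)
  have parts: "ln (fact (szc p t n) ^ k1 p t n * fact (szf p t n) ^ k2 p t n) \<le> (n + k) * M - n"
    using ln_fact_equipartition_le[OF k(1) part_size]
    unfolding szc_def szf_def k1_def k2_def k_def .
  have "2 * real (ff p t n) \<le> n * (n / k - 1) + k"
    using equipartition_pairs_le[OF k(1), of n]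
    unfolding ff_def szc_def szf_def k1_def k2_def k_def by simp
  then have pairs: "ln (bb p) * real (ff p t n) \<le> ln (bb p) * (n * (n / k - 1) + k) / 2"
    using bb_gt_one[OF p] by (simp add: mult_left_mono)
  have "k1 p t n + k2 p t n = kk p t n"
    using k unfolding k1_def k2_def by simp
  then have labels: "ln (fact (k1 p t n) * fact (k2 p t n)) \<le> k * ln n"
    using ln_fact_mult_fact_le[of "k1 p t n" "k2 p t n" n] k(2) unfolding k_def by simp
  show ?thesis
    unfolding decomp using ln_fact_ge[of n] parts pairs labels by linarith
qed

lemma ln_mu_ratio_ge:
  assumes p: "0 < p" "p < 1" and t: "0 \<le> t" "t \<le> e" and n: "1 \<le> n"
    and large: "1 \<le> gam p n - 1 - e" "gam p n + 2 \<le> 2 * log (bb p) n"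
  shows "ln (bb p) * n * t / 2 - partition_error p e n
    \<le> ln (mu p t n / (fact (k1 p t n) * fact (k2 p t n)))"
proof -
  define L \<gamma> G k M where "L = ln (bb p)" and "\<gamma> = gam p n" and "G = gam p n - 1 - e"
    and "k = kk p t n" and "M = ln (2 * log (bb p) n)"
  have L: "0 < L"
    unfolding L_def using bb_gt_one[OF p] by simp
  have a: "G \<le> \<gamma> - x0 p n - t" "\<gamma> - x0 p n - t \<le> \<gamma> - t" and G: "1 \<le> G"
    using x0_bounds[of p n] t large(1) unfolding G_def \<gamma>_def by linarith+
  have k_def': "k = nat \<lceil>real n / (\<gamma> - x0 p n - t)\<rceil>"
    unfolding k_def kk_def \<gamma>_def ..
  note kb = nat_ceiling_quotient_bounds[of "\<gamma> - x0 p n - t" n, folded k_def']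
  have k: "1 \<le> k" "k \<le> n" "real n / real k \<le> \<gamma> - t"
    using kb a G n by linarith+
  have "real n / (\<gamma> - x0 p n - t) \<le> real n / G"
    using a G by (intro divide_left_mono) auto
  then have kG: "real k \<le> real n / G + 1"
    using kb a G n by linarith
  have log_n: "0 < log (bb p) n" "\<gamma> + 2 \<le> 2 * log (bb p) n"
    using large t unfolding \<gamma>_def by linarith+
  have M: "0 \<le> M"
    unfolding M_def using log_n G a t x0_bounds[of p n] by simp
  have gam_M: "L * \<gamma> / 2 = ln n - M"
  proof -
    have "L * \<gamma> / 2 = L * log (bb p) n - L * log (bb p) (log (bb p) n) - L * log (bb p) 2"
      unfolding \<gamma>_def gam_def by (simp add: field_simps)
    also have "\<dots> = ln n - (ln 2 + ln (log (bb p) n))"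
      using L unfolding L_def log_def by simp
    also have "ln 2 + ln (log (bb p) n) = M"
      unfolding M_def using log_n(1) by (simp add: ln_mult)
    finally show ?thesis .
  qed
  have part_size: "ln (real n / real k + 2) \<le> M"
    unfolding M_def using k log_n t n by (subst ln_le_cancel_iff) (auto intro: add_pos_nonneg)
  have "ln (bb p) * n * t / 2 - partition_error p e n
      = L * n * t / 2 + L * n / 2 - (real n / G + 1) * (M + L + ln n)"
    unfolding partition_error_def L_def G_def M_def by simp
  also have "\<dots> \<le> L * n * t / 2 + L * n / 2 - real k * (M + L / 2 + ln n)"
  proof -
    have "real k * (M + L + ln n) \<le> (real n / G + 1) * (M + L + ln n)"
      using M L n by (intro mult_right_mono[OF kG]) simp
    moreover have "0 \<le> L * real k"
      using L by simp
    ultimately show ?thesis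
      by (simp add: algebra_simps)
  qed
  also have "\<dots> = (n * ln n - n) - ((n + real k) * M - n)
      - L * (n * (\<gamma> - t - 1) + real k) / 2 - real k * ln n"
  proof -
    have "L * (real n * (\<gamma> - t - 1) + real k) / 2
        = real n * (L * \<gamma> / 2) - L * n * t / 2 - L * n / 2 + L * k / 2"
      by (simp add: field_simps)
    then show ?thesis
      unfolding gam_M by (simp add: algebra_simps)
  qed
  also have "\<dots> \<le> (n * ln n - n) - ((n + real k) * M - n)
      - L * (n * (n / real k - 1) + real k) / 2 - real k * ln n"
    using k L by (simp add: mult_left_mono)
  also have "\<dots> \<le> ln (mu p t n / (fact (k1 p t n) * fact (k2 p t n)))"
    using ln_mu_ratio_ge_counting[OF p, of t n M] k part_size unfolding k_def L_def by simp
  finally show ?thesis .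
qed

lemma exists_little_o_lower_bound:
  fixes Q B g :: "nat \<Rightarrow> real"
  assumes "\<And>n. 0 < Q n" "g \<in> o(\<lambda>n. real n)"
    and "eventually (\<lambda>n. B n - g n \<le> ln (Q n)) at_top"
  shows "\<exists>h. h \<in> o(\<lambda>n. real n) \<and> (\<forall>n. exp (B n + h n) \<le> Q n)"
proof (intro exI conjI allI)
  define h where "h n = min 0 (ln (Q n) - B n)" for n
  show "exp (B n + h n) \<le> Q n" for n
  proof -
    have "exp (B n + h n) \<le> exp (ln (Q n))"
      unfolding h_def by simp
    then show ?thesis
      using assms(1)[of n] by simp
  qed
  have "eventually (\<lambda>n. norm (h n) \<le> 1 * norm (g n)) at_top"
    using assms(3) by eventually_elim (auto simp: h_def)
  then have "h \<in> O(g)"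
    by (rule bigoI)
  then show "h \<in> o(\<lambda>n. real n)"
    using assms(2) by (rule landau_o.big_small_trans)
qed

theorem mainTheorem9:
  fixes p \<epsilon> :: real and \<theta> :: "nat \<Rightarrow> real"
  assumes "0 < p" and "p < 1" and "0 < \<epsilon>"
    and "\<forall>n. 0 \<le> \<theta> n \<and> \<theta> n \<le> \<epsilon>"
  shows "\<exists>h :: nat \<Rightarrow> real. h \<in> o(\<lambda>n. real n) \<and>
    (\<forall>n. mu p (\<theta> n) n / (fact (k1 p (\<theta> n) n) * fact (k2 p (\<theta> n) n))
          \<ge> bb p powr (\<theta> n * real n / 2) * exp (h n))"
proof -
  define Q where "Q n = mu p (\<theta> n) n / (fact (k1 p (\<theta> n) n) * fact (k2 p (\<theta> n) n))" for n
  define B where "B n = ln (bb p) * n * \<theta> n / 2" for n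
  have "0 < Q n" for n
    unfolding Q_def mu_def Pn_def using assms(1,2) by (simp add: qq_def)
  moreover have "eventually (\<lambda>n. B n - partition_error p \<epsilon> n \<le> ln (Q n)) at_top"
    using eventually_gam_large[OF assms(1,2), of \<epsilon>] eventually_ge_at_top[of 1]
  proof eventually_elim
    case (elim n)
    then show ?case
      unfolding B_def Q_def using ln_mu_ratio_ge[of p "\<theta> n" \<epsilon> n] assms(1,2,4) by simp
  qed
  ultimately obtain h where "h \<in> o(\<lambda>n. real n)" and h: "\<And>n. exp (B n + h n) \<le> Q n"
    using exists_little_o_lower_bound partition_error_small[OF assms(1,2)] by blast
  moreover have "bb p powr (\<theta> n * real n / 2) * exp (h n) = exp (B n + h n)" for n
    unfolding B_def powr_def using bb_gt_one[OF assms(1,2)] by (simp add: exp_add algebra_simps)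
  ultimately show ?thesis
    unfolding Q_def by auto
qed

end
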